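(* The following are theorems of $\mathbf{LEL}$ (for all $a\in\mathbf{A}$, variables $x,y$, $p\in\mathbf{P}$, formulas $\phi$, sentences $\alpha$, and strings $\vec{x}$ of variables and $\vec{a}$ of agents of equal length): (1) $[x:=a]\phi\leftrightarrow[y:=a]\phi[y/x]$, provided $y$ does not occur in $\phi$; (2) $[\vec{x}:=\vec{a}](\mathsf{K}_{\vec{x}}\alpha\to\mathsf{K}_{\vec{x}}[\vec{x}:=\vec{a}]\mathsf{K}_{\vec{x}}\alpha)$; (3) $[x:=a](\neg p_x\to\mathsf{K}_{x}[x:=a]\neg p_x)$.
   Context: Fix a nonempty finite set $\mathbf{A}$ of agents, a countable set $\mathbf{X}$ of variables disjoint from $\mathbf{A}$, and a countable set $\mathbf{P}$ of predicate letters. Formulas and free variables are defined simultaneously: $\phi ::= p_x \mid \top \mid \neg\phi \mid (\phi\wedge\phi) \mid [x:=a]\phi \mid \mathsf{K}_X\alpha$ ($p\in\mathbf{P}$, $x\in\mathbf{X}$, $a\in\mathbf{A}$, $X\subseteq\mathbf{X}$ finite possibly empty, $\alpha$ a formula with no free variables), $FV(p_x)=\{x\}$, $FV(\top)=\emptyset$, $FV(\neg\phi)=FV(\phi)$, $FV(\phi\wedge\psi)=FV(\phi)\cup FV(\psi)$, $FV([x:=a]\phi)=FV(\phi)\setminus\{x\}$, $FV(\mathsf{K}_X\alpha)=X$. Sentences are formulas without free variables. $\bot:=\neg\top$, other Booleans as usual, $\langle x:=a\rangle\phi:=\neg[x:=a]\neg\phi$, $\widehat{\mathsf{K}}_X\alpha:=\neg\mathsf{K}_X\neg\alpha$.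 $\phi[y/x]$ denotes the result of replacing all free occurrences of $x$ in $\phi$ by $y$ (including in the index sets $X$ of subformulas $\mathsf{K}_X\alpha$); it is admissible if $x$ has no free occurrence in $\phi$ within the scope of an operator $[y:=b]$, $b\in\mathbf{A}$. For $\vec{x}=x_1,\dots,x_n$ and $\vec{a}=a_1,\dots,a_n$, $[\vec{x}:=\vec{a}]\phi$ abbreviates $[x_1:=a_1]\cdots[x_n:=a_n]\phi$ (just $\phi$ if $n=0$), $\{\vec x\}=\{x_1,\dots,x_n\}$, $\{\vec a\}=\{a_1,\dots,a_n\}$, $\mathsf{K}_{\vec{x}}\alpha:=\mathsf{K}_{\{\vec{x}\}}\alpha$, and $\mathsf{K}_x:=\mathsf{K}_{\{x\}}$. The system $\mathbf{LEL}$ has axioms: all propositional tautologies; $\mathsf{K}_X(\alpha\to\beta)\to(\mathsf{K}_X\alpha\to\mathsf{K}_X\beta)$; $\mathsf{K}_X\alpha\to\mathsf{K}_Y\alpha$ for $X\subseteq Y$; $[x:=a](\phi\to\psi)\to([x:=a]\phi\to[x:=a]\psi)$; $\langle x:=a\rangle\phi\to[x:=a]\phi$; $\phi\to[x:=a]\phi$ for $x\notin FV(\phi)$; $[y:=a]([x:=a]\phi\to\phi[y/x])$ for admissible $\phi[y/x]$; $[x:=a][y:=b]\phi\to[y:=b][x:=a]\phi$ for $x\neq y$; $\bigwedge_{a\in\mathbf{A}}[x:=a]\phi\to\phi$; $\mathsf{K}_X\alpha\to\alpha$; $[\vec{x}:=\vec{a}](\neg\mathsf{K}_{\vec{x}}\alpha\to\mathsf{K}_{\vec{x}}[\vec{x}:=\vec{a}]\neg\mathsf{K}_{\vec{x}}\alpha)$;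 $[x:=a]\mathsf{K}_{x}\langle x:=a\rangle\top$; $[x:=a](p_x\to\mathsf{K}_{x}[x:=a]p_x)$; $[\vec{x}:=\vec{a}](\bigwedge_{b\in B}[x:=b]\bot\to\mathsf{K}_{\vec{x}}\bigwedge_{b\in B}[x:=b]\bot)$ where $B=\mathbf{A}\setminus\{\vec{a}\}$. Rules: modus ponens; from $\alpha$ infer $\mathsf{K}_\emptyset\alpha$ ($\alpha$ a sentence); from $\phi$ infer $[x:=a]\phi$. (Here $\alpha,\beta$ range over sentences, $\phi,\psi$ over formulas.) *)

theory Defs
  imports Main "HOL-Library.Countable"
begin

text \<open>Syntax of LEL. Agents 'a (finite nonempty type), variables 'v, predicate letters 'p.\<close>

datatype ('a, 'v, 'p) fm =
    Pred 'p 'v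
  | Top
  | Neg "('a, 'v, 'p) fm"
  | Conj "('a, 'v, 'p) fm" "('a, 'v, 'p) fm"
  | Assign 'v 'a "('a, 'v, 'p) fm"
  | Know "'v set" "('a, 'v, 'p) fm"

fun FV :: "('a, 'v, 'p) fm \<Rightarrow> 'v set" where
  "FV (Pred p x) = {x}"
| "FV Top = {}"
| "FV (Neg \<phi>) = FV \<phi>"
| "FV (Conj \<phi> \<psi>) = FV \<phi> \<union> FV \<psi>"
| "FV (Assign x a \<phi>) = FV \<phi> - {x}"
| "FV (Know X \<alpha>) = X"

fun wf :: "('a, 'v, 'p) fm \<Rightarrow> bool" where
  "wf (Pred p x) = True"
| "wf Top = True"
| "wf (Neg \<phi>) = wf \<phi>"
| "wf (Conj \<phi> \<psi>) = (wf \<phi> \<and> wf \<psi>)"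
| "wf (Assign x a \<phi>) = wf \<phi>"
| "wf (Know X \<alpha>) = (finite X \<and> wf \<alpha> \<and> FV \<alpha> = {})"

definition sentence :: "('a, 'v, 'p) fm \<Rightarrow> bool" where
  "sentence \<phi> \<longleftrightarrow> wf \<phi> \<and> FV \<phi> = {}"

fun vars :: "('a, 'v, 'p) fm \<Rightarrow> 'v set" where
  "vars (Pred p x) = {x}"
| "vars Top = {}"
| "vars (Neg \<phi>) = vars \<phi>"
| "vars (Conj \<phi> \<psi>) = vars \<phi> \<union> vars \<psi>"
| "vars (Assign x a \<phi>) = insert x (vars \<phi>)"
| "vars (Know X \<alpha>) = X \<union> vars \<alpha>"

text \<open>subst y x \<phi> is \<phi>[y/x]: replace free occurrences of x by y.\<close>
fun subst :: "'v \<Rightarrow> 'v \<Rightarrow> ('a, 'v, 'p) fm \<Rightarrow> ('a, 'v, 'p) fm" where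
  "subst y x (Pred p z) = Pred p (if z = x then y else z)"
| "subst y x Top = Top"
| "subst y x (Neg \<phi>) = Neg (subst y x \<phi>)"
| "subst y x (Conj \<phi> \<psi>) = Conj (subst y x \<phi>) (subst y x \<psi>)"
| "subst y x (Assign z a \<phi>) = (if z = x then Assign z a \<phi> else Assign z a (subst y x \<phi>))"
| "subst y x (Know X \<alpha>) = Know ((\<lambda>z. if z = x then y else z) ` X) \<alpha>"

text \<open>admissible y x \<phi>: x has no free occurrence in \<phi> within the scope of some [y:=b].\<close>
fun admissible :: "'v \<Rightarrow> 'v \<Rightarrow> ('a, 'v, 'p) fm \<Rightarrow> bool" where
  "admissible y x (Pred p z) = True"
| "admissible y x Top = True"
| "admissible y x (Neg \<phi>) = admissible y x \<phi>"
| "admissible y x (Conj \<phi> \<psi>) = (admissible y x \<phi> \<and> admissible y x \<psi>)"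
| "admissible y x (Assign z a \<phi>) =
     (if z = x then True else if z = y then x \<notin> FV \<phi> else admissible y x \<phi>)"
| "admissible y x (Know X \<alpha>) = True"

definition Bot :: "('a, 'v, 'p) fm" where "Bot = Neg Top"
definition Imp :: "('a, 'v, 'p) fm \<Rightarrow> ('a, 'v, 'p) fm \<Rightarrow> ('a, 'v, 'p) fm" where
  "Imp \<phi> \<psi> = Neg (Conj \<phi> (Neg \<psi>))"
definition Iff :: "('a, 'v, 'p) fm \<Rightarrow> ('a, 'v, 'p) fm \<Rightarrow> ('a, 'v, 'p) fm" where
  "Iff \<phi> \<psi> = Conj (Imp \<phi> \<psi>) (Imp \<psi> \<phi>)"
definition Dia :: "'v \<Rightarrow> 'a \<Rightarrow> ('a, 'v, 'p) fm \<Rightarrow> ('a, 'v, 'p) fm" where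
  "Dia x a \<phi> = Neg (Assign x a (Neg \<phi>))"

fun BigConj :: "('a, 'v, 'p) fm list \<Rightarrow> ('a, 'v, 'p) fm" where
  "BigConj [] = Top"
| "BigConj (\<phi> # \<phi>s) = Conj \<phi> (BigConj \<phi>s)"

text \<open>[xs := as] \<phi> = [x1:=a1]...[xn:=an]\<phi> (used only when lengths agree).\<close>
definition MAssign :: "'v list \<Rightarrow> 'a list \<Rightarrow> ('a, 'v, 'p) fm \<Rightarrow> ('a, 'v, 'p) fm" where
  "MAssign xs as \<phi> = foldr (\<lambda>(x, a) \<psi>. Assign x a \<psi>) (zip xs as) \<phi>"

text \<open>Propositional tautologies: valid under every truth assignment to the
  non-Boolean subformulas (atoms p_x, [x:=a]\<phi>, K_X \<alpha>).\<close>
fun tv :: "(('a, 'v, 'p) fm \<Rightarrow> bool) \<Rightarrow> ('a, 'v, 'p) fm \<Rightarrow> bool" where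
  "tv v Top = True"
| "tv v (Neg \<phi>) = (\<not> tv v \<phi>)"
| "tv v (Conj \<phi> \<psi>) = (tv v \<phi> \<and> tv v \<psi>)"
| "tv v \<phi> = v \<phi>"

definition taut :: "('a, 'v, 'p) fm \<Rightarrow> bool" where
  "taut \<phi> \<longleftrightarrow> (\<forall>v. tv v \<phi>)"

text \<open>Axiom schemes of LEL (sentence requirements on \<alpha>, \<beta> are enforced by wf of the instance).\<close>
inductive ax :: "('a::finite, 'v, 'p) fm \<Rightarrow> bool" where
  A_taut: "taut \<phi> \<Longrightarrow> ax \<phi>"
| A_Kdist: "ax (Imp (Know X (Imp \<alpha> \<beta>)) (Imp (Know X \<alpha>) (Know X \<beta>)))"
| A_Kmono: "X \<subseteq> Y \<Longrightarrow> ax (Imp (Know X \<alpha>) (Know Y \<alpha>))"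
| A_Adist: "ax (Imp (Assign x a (Imp \<phi> \<psi>)) (Imp (Assign x a \<phi>) (Assign x a \<psi>)))"
| A_func: "ax (Imp (Dia x a \<phi>) (Assign x a \<phi>))"
| A_vac: "x \<notin> FV \<phi> \<Longrightarrow> ax (Imp \<phi> (Assign x a \<phi>))"
| A_subst: "admissible y x \<phi> \<Longrightarrow> ax (Assign y a (Imp (Assign x a \<phi>) (subst y x \<phi>)))"
| A_comm: "x \<noteq> y \<Longrightarrow> ax (Imp (Assign x a (Assign y b \<phi>)) (Assign y b (Assign x a \<phi>)))"
| A_all: "set as = UNIV \<Longrightarrow> ax (Imp (BigConj (map (\<lambda>a. Assign x a \<phi>) as)) \<phi>)"
| A_T: "ax (Imp (Know X \<alpha>) \<alpha>)"
| A_neg: "length xs = length as \<Longrightarrow>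
    ax (MAssign xs as (Imp (Neg (Know (set xs) \<alpha>))
          (Know (set xs) (MAssign xs as (Neg (Know (set xs) \<alpha>))))))"
| A_self: "ax (Assign x a (Know {x} (Dia x a Top)))"
| A_pred: "ax (Assign x a (Imp (Pred p x) (Know {x} (Assign x a (Pred p x)))))"
| A_range: "length xs = length as \<Longrightarrow> set bs = UNIV - set as \<Longrightarrow>
    ax (MAssign xs as (Imp (BigConj (map (\<lambda>b. Assign x b Bot) bs))
          (Know (set xs) (BigConj (map (\<lambda>b. Assign x b Bot) bs)))))"

inductive LEL :: "('a::finite, 'v, 'p) fm \<Rightarrow> bool" where
  L_ax: "ax \<phi> \<Longrightarrow> wf \<phi> \<Longrightarrow> LEL \<phi>"
| L_mp: "LEL \<phi> \<Longrightarrow> LEL (Imp \<phi> \<psi>) \<Longrightarrow> LEL \<psi>"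
| L_nec: "LEL \<alpha> \<Longrightarrow> FV \<alpha> = {} \<Longrightarrow> LEL (Know {} \<alpha>)"
| L_gen: "LEL \<phi> \<Longrightarrow> LEL (Assign x a \<phi>)"

end

theory Submission
  imports Defs
begin

text \<open>
  (1) is renaming of a bound variable: since \<open>y\<close> is fresh, vacuity gives
  \<open>[x:=a]\<phi> \<rightarrow> [y:=a][x:=a]\<phi>\<close>, and the substitution axiom under \<open>[y:=a]\<close> turns this
  into \<open>[y:=a]\<phi>[y/x]\<close>; the converse is the same argument for \<open>\<phi>[y/x]\<close> and \<open>x\<close>, because
  \<open>\<phi>[y/x][x/y] = \<phi>\<close>.

  (2) and (3) both follow from the negative introspection axiom by one transfer principle:
  if under \<open>[xs:=as]\<close> a formula \<open>\<theta>\<close> is equivalent to \<open>\<not>K\<^sub>X \<beta>\<close>, where \<open>X = set xs\<close>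
  and \<open>\<beta>\<close> is a sentence, then
  \<open>\<theta> \<rightarrow> K\<^sub>X [xs:=as]\<theta>\<close> holds under \<open>[xs:=as]\<close>. For (2) take \<open>\<theta> = K\<^sub>X \<alpha>\<close> and
  \<open>\<beta> = [xs:=as]\<not>K\<^sub>X \<alpha>\<close>, for (3) \<open>\<theta> = \<not>p\<^sub>x\<close> and \<open>\<beta> = [x:=a]p\<^sub>x\<close>. One direction of
  each equivalence is an axiom (negative introspection, resp. \<open>p\<^sub>x \<rightarrow> K\<^sub>x[x:=a]p\<^sub>x\<close>), the
  other is an instance of \<open>[xs:=as](K\<^sub>X [xs:=as]\<psi> \<rightarrow> \<psi>)\<close>, which follows from T and
  the substitution axiom.
\<close>

lemma subst_self [simp]: "subst x x \<phi> = \<phi>"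
  by (induction \<phi>) auto

lemma admissible_self [simp]: "admissible x x \<phi>"
  by (induction \<phi>) auto

lemma FV_subset_vars: "FV \<phi> \<subseteq> vars \<phi>"
  by (induction \<phi>) auto

lemma wf_subst: "wf \<phi> \<Longrightarrow> wf (subst y x \<phi>)"
  by (induction \<phi>) auto

lemma FV_subst_eliminates: "x \<noteq> y \<Longrightarrow> x \<notin> FV (subst y x \<phi>)"
  by (induction \<phi>) auto

lemma subst_fresh: "x \<notin> vars \<phi> \<Longrightarrow> subst y x \<phi> = \<phi>"
  by (induction \<phi>) (auto intro!: image_cong[where g = id, simplified])

lemma subst_subst_inverse: "y \<notin> vars \<phi> \<Longrightarrow> subst x y (subst y x \<phi>) = \<phi>"
proof (induction \<phi>)
  case (Know X \<alpha>)
  then have "(\<lambda>z. if z = y then x else z) ` (\<lambda>z. if z = x then y else z) ` X = X"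
    by (force simp: image_iff)
  then show ?case by simp
qed (auto simp: subst_fresh)

lemma admissible_fresh: "y \<notin> vars \<phi> \<Longrightarrow> admissible y x \<phi>"
  by (induction \<phi>) auto

lemma admissible_subst_inverse: "y \<notin> vars \<phi> \<Longrightarrow> admissible x y (subst y x \<phi>)"
  using FV_subset_vars by (induction \<phi>) fastforce+

lemma LEL_wf: "LEL \<phi> \<Longrightarrow> wf \<phi>"
  by (induction rule: LEL.induct) (auto simp: Imp_def)

lemma LEL_taut: "taut \<phi> \<Longrightarrow> wf \<phi> \<Longrightarrow> LEL \<phi>"
  by (rule L_ax) (auto intro: A_taut)

lemma LEL_taut_mp2:
  assumes "LEL P" "LEL Q" "taut (Imp P (Imp Q R))" "wf R"
  shows "LEL R"
proof -
  have "LEL (Imp P (Imp Q R))"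
    using assms by (intro LEL_taut) (auto simp: Imp_def dest!: LEL_wf)
  then show ?thesis using assms(1,2) L_mp by blast
qed

lemma LEL_imp_trans: "LEL (Imp P Q) \<Longrightarrow> LEL (Imp Q R) \<Longrightarrow> LEL (Imp P R)"
  by (rule LEL_taut_mp2[where R = "Imp P R"], assumption+)
    (auto simp: taut_def Imp_def dest!: LEL_wf)

lemma LEL_Assign_imp:
  assumes "LEL (Assign x a (Imp A B))"
  shows "LEL (Imp (Assign x a A) (Assign x a B))"
proof -
  have "wf A" "wf B" using LEL_wf[OF assms] by (auto simp: Imp_def)
  then have "LEL (Imp (Assign x a (Imp A B)) (Imp (Assign x a A) (Assign x a B)))"
    by (intro L_ax A_Adist) (auto simp: Imp_def)
  with assms show ?thesis using L_mp by blast
qed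

lemma LEL_Assign_mono: "LEL (Imp A B) \<Longrightarrow> LEL (Imp (Assign x a A) (Assign x a B))"
  by (intro LEL_Assign_imp L_gen)

lemma LEL_Assign_subst:
  assumes "wf \<phi>" "admissible y x \<phi>" "y \<notin> FV (Assign x a \<phi>)"
  shows "LEL (Imp (Assign x a \<phi>) (Assign y a (subst y x \<phi>)))"
proof -
  have "LEL (Imp (Assign x a \<phi>) (Assign y a (Assign x a \<phi>)))"
    using A_vac[OF assms(3)] assms(1) by (intro L_ax) (auto simp: Imp_def)
  moreover have "LEL (Assign y a (Imp (Assign x a \<phi>) (subst y x \<phi>)))"
    using A_subst[OF assms(2)] assms(1) wf_subst by (intro L_ax) (auto simp: Imp_def)
  ultimately show ?thesis by (blast intro: LEL_imp_trans LEL_Assign_imp)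
qed

lemma LEL_Assign_rename:
  assumes "wf \<phi>" "y \<notin> vars \<phi>"
  shows "LEL (Iff (Assign x a \<phi>) (Assign y a (subst y x \<phi>)))"
proof -
  have forward: "LEL (Imp (Assign x a \<phi>) (Assign y a (subst y x \<phi>)))"
    using assms FV_subset_vars[of \<phi>] by (intro LEL_Assign_subst admissible_fresh) auto
  have "x \<notin> FV (Assign y a (subst y x \<phi>))"
    using FV_subst_eliminates[of x y \<phi>] by (cases "x = y") auto
  then have "LEL (Imp (Assign y a (subst y x \<phi>)) (Assign x a (subst x y (subst y x \<phi>))))"
    using assms by (intro LEL_Assign_subst wf_subst admissible_subst_inverse) auto
  then have backward: "LEL (Imp (Assign y a (subst y x \<phi>)) (Assign x a \<phi>))"
    using subst_subst_inverse[OF assms(2)] by simp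
  show ?thesis
    using LEL_wf[OF forward]
    by (intro LEL_taut_mp2[OF forward backward]) (auto simp: taut_def Iff_def Imp_def)
qed

lemma LEL_Know_mono:
  assumes "LEL (Imp \<alpha> \<beta>)" "FV \<alpha> = {}" "FV \<beta> = {}" "finite X"
  shows "LEL (Imp (Know X \<alpha>) (Know X \<beta>))"
proof -
  have wf: "wf \<alpha>" "wf \<beta>" using LEL_wf[OF assms(1)] by (auto simp: Imp_def)
  have "LEL (Know {} (Imp \<alpha> \<beta>))"
    using assms(1-3) by (intro L_nec) (auto simp: Imp_def)
  moreover have "LEL (Imp (Know {} (Imp \<alpha> \<beta>)) (Know X (Imp \<alpha> \<beta>)))"
    using assms wf by (intro L_ax A_Kmono) (auto simp: Imp_def)
  moreover have "LEL (Imp (Know X (Imp \<alpha> \<beta>)) (Imp (Know X \<alpha>) (Know X \<beta>)))"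
    using assms wf by (intro L_ax A_Kdist) (auto simp: Imp_def)
  ultimately show ?thesis using L_mp by blast
qed

lemma MAssign_Nil [simp]: "MAssign [] as \<phi> = \<phi>" "MAssign xs [] \<phi> = \<phi>"
  by (auto simp: MAssign_def)

lemma MAssign_Cons [simp]: "MAssign (x # xs) (a # as) \<phi> = Assign x a (MAssign xs as \<phi>)"
  by (simp add: MAssign_def)

lemma wf_MAssign [simp]: "wf (MAssign xs as \<phi>) = wf \<phi>"
proof (induction xs arbitrary: as)
  case (Cons x xs)
  then show ?case by (cases as) auto
qed simp

lemma FV_MAssign: "length xs = length as \<Longrightarrow> FV (MAssign xs as \<phi>) = FV \<phi> - set xs"
proof (induction xs arbitrary: as)
  case (Cons x xs)
  then show ?case by (cases as) auto
qed simp

lemma LEL_MAssign_gen: "LEL \<phi> \<Longrightarrow> LEL (MAssign xs as \<phi>)"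
proof (induction xs arbitrary: as)
  case (Cons x xs)
  then show ?case by (cases as) (auto intro: L_gen)
qed simp

lemma LEL_MAssign_dist:
  assumes "wf A" "wf B"
  shows "LEL (Imp (MAssign xs as (Imp A B)) (Imp (MAssign xs as A) (MAssign xs as B)))"
proof (induction xs arbitrary: as)
  case Nil
  show ?case using assms by (intro LEL_taut) (auto simp: taut_def Imp_def)
next
  case (Cons x xs)
  show ?case
  proof (cases as)
    case Nil
    then show ?thesis using assms by (intro LEL_taut) (auto simp: taut_def Imp_def)
  next
    case (Cons b bs)
    have "LEL (Imp (Assign x b (MAssign xs bs (Imp A B)))
                   (Assign x b (Imp (MAssign xs bs A) (MAssign xs bs B))))"
      using Cons.IH by (rule LEL_Assign_mono)
    moreover have "LEL (Imp (Assign x b (Imp (MAssign xs bs A) (MAssign xs bs B)))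
                   (Imp (Assign x b (MAssign xs bs A)) (Assign x b (MAssign xs bs B))))"
      using assms by (intro L_ax A_Adist) (auto simp: Imp_def)
    ultimately show ?thesis using Cons LEL_imp_trans by simp
  qed
qed

lemma LEL_MAssign_imp:
  assumes "LEL (MAssign xs as (Imp A B))"
  shows "LEL (Imp (MAssign xs as A) (MAssign xs as B))"
proof -
  have "wf A" "wf B" using LEL_wf[OF assms] by (auto simp: Imp_def)
  with assms show ?thesis using LEL_MAssign_dist L_mp by blast
qed

lemma LEL_MAssign_taut_mp2:
  assumes "LEL (MAssign xs as P)" "LEL (MAssign xs as Q)" "taut (Imp P (Imp Q R))" "wf R"
  shows "LEL (MAssign xs as R)"
proof -
  have "wf P" "wf Q" using assms(1,2) by (auto dest: LEL_wf)
  then have "LEL (MAssign xs as (Imp P (Imp Q R)))"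
    using assms(3,4) by (intro LEL_MAssign_gen LEL_taut) (auto simp: Imp_def)
  then show ?thesis using assms(1,2) LEL_MAssign_imp L_mp by blast
qed

lemma LEL_MAssign_vacuous:
  assumes "set xs \<inter> FV \<theta> = {}" "wf \<theta>"
  shows "LEL (Imp \<theta> (MAssign xs as \<theta>))"
  using assms(1)
proof (induction xs arbitrary: as)
  case Nil
  show ?case using assms(2) by (intro LEL_taut) (auto simp: taut_def Imp_def)
next
  case (Cons x xs)
  show ?case
  proof (cases as)
    case Nil
    then show ?thesis using assms(2) by (intro LEL_taut) (auto simp: taut_def Imp_def)
  next
    case (Cons b bs)
    have "LEL (Imp \<theta> (Assign x b \<theta>))"
      using Cons.prems assms(2) by (intro L_ax A_vac) (auto simp: Imp_def)
    moreover have "LEL (Imp (Assign x b \<theta>) (Assign x b (MAssign xs bs \<theta>)))"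
      using Cons.IH Cons.prems by (intro LEL_Assign_mono) auto
    ultimately show ?thesis using Cons LEL_imp_trans by simp
  qed
qed

text \<open>Iterates the instance \<open>[x:=a]([x:=a]\<rho> \<rightarrow> \<rho>)\<close> of the substitution axiom; that
  formula has no free variables among the remaining \<open>xs\<close>, so by vacuity it also holds
  under their assignment.\<close>

lemma LEL_MAssign_absorb:
  assumes "length xs = length as" "wf \<psi>"
  shows "LEL (MAssign xs as (Imp (MAssign xs as \<psi>) \<psi>))"
  using assms
proof (induction xs arbitrary: as)
  case Nil
  then show ?case by (intro LEL_taut) (auto simp: taut_def Imp_def)
next
  case (Cons x xs)
  then obtain b bs where as: "as = b # bs" "length xs = length bs" by (cases as) auto
  define \<rho> where "\<rho> = MAssign xs bs \<psi>"
  define \<theta> where "\<theta> = Imp (Assign x b \<rho>) \<rho>"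
  have wf: "wf \<rho>" "wf \<theta>" using Cons.prems by (auto simp: \<rho>_def \<theta>_def Imp_def)
  have "LEL (Assign x b \<theta>)"
    using A_subst[of x x \<rho> b] wf by (intro L_ax) (auto simp: \<theta>_def Imp_def)
  moreover have "FV \<theta> = FV \<psi> - set xs"
    using FV_MAssign[OF as(2)] by (auto simp: \<theta>_def \<rho>_def Imp_def)
  then have "LEL (Imp (Assign x b \<theta>) (Assign x b (MAssign xs bs \<theta>)))"
    using wf by (intro LEL_Assign_mono LEL_MAssign_vacuous) auto
  ultimately have \<theta>: "LEL (MAssign (x # xs) as \<theta>)" using as L_mp by auto
  have "LEL (MAssign (x # xs) as (Imp \<rho> \<psi>))"
    using Cons.IH[OF as(2) Cons.prems(2)] as by (auto simp: \<rho>_def intro: L_gen)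
  from LEL_MAssign_taut_mp2[OF \<theta> this] show ?case
    using as Cons.prems(2) by (auto simp: \<rho>_def \<theta>_def taut_def Imp_def)
qed

lemma LEL_MAssign_Know_elim:
  assumes "length xs = length as" "wf \<psi>" "FV \<psi> \<subseteq> set xs" "finite X"
  shows "LEL (MAssign xs as (Imp (Know X (MAssign xs as \<psi>)) \<psi>))"
proof -
  have closed: "FV (MAssign xs as \<psi>) = {}"
    using assms(3) by (auto simp: FV_MAssign[OF assms(1)])
  then have "LEL (Imp (Know X (MAssign xs as \<psi>)) (MAssign xs as \<psi>))"
    using assms(2,4) by (intro L_ax A_T) (auto simp: Imp_def)
  then have "LEL (MAssign xs as (Imp (Know X (MAssign xs as \<psi>)) (MAssign xs as \<psi>)))"
    by (rule LEL_MAssign_gen)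
  with LEL_MAssign_absorb[OF assms(1,2)] show ?thesis
    by (rule LEL_MAssign_taut_mp2) (auto simp: taut_def Imp_def assms(2,4) closed)
qed

lemma LEL_MAssign_introspection_transfer:
  assumes len: "length xs = length as" and "sentence \<beta>" "wf \<theta>" "FV \<theta> \<subseteq> set xs"
    and equiv: "LEL (MAssign xs as (Iff \<theta> (Neg (Know (set xs) \<beta>))))"
  shows "LEL (MAssign xs as (Imp \<theta> (Know (set xs) (MAssign xs as \<theta>))))"
proof -
  let ?M = "MAssign xs as" and ?X = "set xs"
  let ?N = "Neg (Know ?X \<beta>)"
  have \<beta>: "wf \<beta>" "FV \<beta> = {}" using assms(2) by (auto simp: sentence_def)
  have closed: "FV (?M ?N) = {}" "FV (?M \<theta>) = {}"
    using assms(4) by (auto simp: FV_MAssign[OF len])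
  have neg: "LEL (?M (Imp ?N (Know ?X (?M ?N))))"
    using A_neg[OF len, of \<beta>] \<beta> closed by (intro L_ax) (auto simp: Imp_def)
  have "LEL (?M (Imp ?N \<theta>))"
    by (rule LEL_MAssign_taut_mp2[OF equiv equiv])
      (use assms(3) \<beta> in \<open>auto simp: taut_def Iff_def Imp_def\<close>)
  then have "LEL (Imp (Know ?X (?M ?N)) (Know ?X (?M \<theta>)))"
    using closed by (intro LEL_Know_mono LEL_MAssign_imp) auto
  then have "LEL (?M (Imp (Know ?X (?M ?N)) (Know ?X (?M \<theta>))))"
    by (rule LEL_MAssign_gen)
  with neg have "LEL (?M (Imp ?N (Know ?X (?M \<theta>))))"
    by (rule LEL_MAssign_taut_mp2)
      (use assms(3) \<beta> closed in \<open>auto simp: taut_def Imp_def\<close>)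
  with equiv show ?thesis
    by (rule LEL_MAssign_taut_mp2)
      (use assms(3) closed in \<open>auto simp: taut_def Iff_def Imp_def\<close>)
qed

lemma LEL_positive_introspection:
  assumes "sentence \<alpha>" "length xs = length as"
  shows "LEL (MAssign xs as (Imp (Know (set xs) \<alpha>)
           (Know (set xs) (MAssign xs as (Know (set xs) \<alpha>)))))"
proof -
  let ?M = "MAssign xs as" and ?X = "set xs"
  let ?K = "Know ?X \<alpha>"
  have K: "wf ?K" "FV ?K \<subseteq> ?X" using assms(1) by (auto simp: sentence_def)
  have \<beta>: "sentence (?M (Neg ?K))" using K by (simp add: sentence_def FV_MAssign[OF assms(2)])
  have "LEL (?M (Imp (Neg ?K) (Know ?X (?M (Neg ?K)))))"
    using A_neg[OF assms(2), of \<alpha>] K \<beta> by (intro L_ax) (auto simp: sentence_def Imp_def)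
  moreover have "LEL (?M (Imp (Know ?X (?M (Neg ?K))) (Neg ?K)))"
    using K by (intro LEL_MAssign_Know_elim assms(2)) auto
  ultimately have "LEL (?M (Iff ?K (Neg (Know ?X (?M (Neg ?K))))))"
    by (rule LEL_MAssign_taut_mp2)
      (use K \<beta> in \<open>auto simp: sentence_def taut_def Iff_def Imp_def\<close>)
  with assms(2) \<beta> K show ?thesis by (intro LEL_MAssign_introspection_transfer) auto
qed

lemma LEL_negated_atom_known:
  fixes a :: "'a::finite" and x :: 'v and p :: 'p
  shows "LEL (Assign x a (Imp (Neg (Pred p x)) (Know {x} (Assign x a (Neg (Pred p x))))))"
proof -
  let ?P = "Pred p x :: ('a, 'v, 'p) fm"
  have "LEL (Assign x a (Imp ?P (Know {x} (Assign x a ?P))))"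
    by (intro L_ax A_pred) (auto simp: Imp_def)
  moreover have "LEL (Assign x a (Imp (Know {x} (Assign x a ?P)) ?P))"
    using LEL_MAssign_Know_elim[of "[x]" "[a]" ?P "{x}"] by simp
  ultimately have "LEL (Assign x a (Iff (Neg ?P) (Neg (Know {x} (Assign x a ?P)))))"
    by (rule LEL_MAssign_taut_mp2[of "[x]" "[a]", unfolded MAssign_Cons MAssign_Nil])
      (auto simp: taut_def Iff_def Imp_def)
  then show ?thesis
    using LEL_MAssign_introspection_transfer[of "[x]" "[a]" "Assign x a ?P" "Neg ?P"]
    by (simp add: sentence_def)
qed

theorem proposition5:
  fixes a :: "'a::finite" and x y :: "'v::countable" and p :: "'p::countable"
    and \<phi> \<alpha> :: "('a, 'v, 'p) fm" and xs :: "'v list" and as :: "'a list"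
  shows "(wf \<phi> \<and> y \<notin> vars \<phi> \<longrightarrow> LEL (Iff (Assign x a \<phi>) (Assign y a (subst y x \<phi>))))
       \<and> (sentence \<alpha> \<and> length xs = length as \<longrightarrow>
            LEL (MAssign xs as (Imp (Know (set xs) \<alpha>)
                   (Know (set xs) (MAssign xs as (Know (set xs) \<alpha>))))))
       \<and> LEL (Assign x a (Imp (Neg (Pred p x)) (Know {x} (Assign x a (Neg (Pred p x))))))"
  by (intro conjI impI LEL_Assign_rename LEL_positive_introspection LEL_negated_atom_known) auto

end
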